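(* Let $(M,\bar g)$ be an umbilically synchronized space-time and let $V$ be a conformal vector field on $M$, $\pounds_V\bar g=2\psi\bar g$. Then $V$ is an inheriting conformal vector field with respect to the flow lines of the unit timelike vector field $\mathbf n$ (i.e. $\pounds_V\mathbf n$ is a function multiple of $\mathbf n$) if and only if $V=N\,T(t)\,\mathbf n+U$, where $N$ is the lapse function, $T(t)$ is a function of $t$ only, and $U$ is a vector field orthogonal to $\mathbf n$.
   Context: An umbilically synchronized space-time is an $(n+1)$-dimensional Lorentzian manifold $M$ with coordinates $(t,x^1,\dots,x^n)$ and metric $ds^2=-N^2dt^2+g_{ij}dx^idx^j$ (zero shift), lapse $N>0$, such that each spatial slice $\Sigma_t=\{t=\text{const}\}$ is totally umbilical: $K_{ij}=\bar g(\bar\nabla_{\partial_i}\mathbf n,\partial_j)=\tau g_{ij}$, where $\mathbf n=\frac1N\partial_t$ is the unit normal and $\tau$ the mean curvature. $\pounds$ denotes the Lie derivative. *)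

theory Defs
  imports "HOL-Analysis.Analysis"
begin

text \<open>Points of space-time in the global chart (t, x^1..x^n): pairs (t, x) with x in real^'n.
  Tangent vectors at a point are likewise elements of real \<times> (real^'n) (components (v^0, v^i)).\<close>

definition dd :: "('a::real_normed_vector \<Rightarrow> 'b::real_normed_vector) \<Rightarrow> 'a \<Rightarrow> 'a \<Rightarrow> 'b" where
  "dd f p v = frechet_derivative f (at p) v"

definition gbar :: "(real \<times> (real^'n) \<Rightarrow> real) \<Rightarrow> (real \<times> (real^'n) \<Rightarrow> real^'n^'n)
    \<Rightarrow> real \<times> (real^'n) \<Rightarrow> real \<times> (real^'n) \<Rightarrow> real \<times> (real^'n) \<Rightarrow> real" where
  "gbar N g p u w = - ((N p) ^ 2 * fst u * fst w) + ((snd u) \<bullet> (g p *v snd w))"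

definition lie_bracket :: "('a::real_normed_vector \<Rightarrow> 'a) \<Rightarrow> ('a \<Rightarrow> 'a) \<Rightarrow> 'a \<Rightarrow> 'a" where
  "lie_bracket X Y p = dd Y p (X p) - dd X p (Y p)"

definition unit_normal :: "(real \<times> (real^'n) \<Rightarrow> real) \<Rightarrow> real \<times> (real^'n) \<Rightarrow> real \<times> (real^'n)" where
  "unit_normal N p = (1 / N p, 0)"

definition coord_vec :: "'n \<Rightarrow> real \<times> (real^'n)" where
  "coord_vec i = (0, axis i 1)"

text \<open>Lie derivative of a metric G along V, evaluated on constant (coordinate) vectors u w:
  (L_V G)(u,w) = V(G(u,w)) - G([V,u],w) - G(u,[V,w]), with [V,u] = - DV u.\<close>
definition lie_metric :: "('a::real_normed_vector \<Rightarrow> 'a \<Rightarrow> 'a \<Rightarrow> real) \<Rightarrow> ('a \<Rightarrow> 'a) \<Rightarrow> 'a \<Rightarrow> 'a \<Rightarrow> 'a \<Rightarrow> real" where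
  "lie_metric G V p u w = dd (\<lambda>q. G q u w) p (V p) + G p (dd V p u) w + G p u (dd V p w)"

text \<open>Levi-Civita connection in lowered form, G(\<nabla>_X Y, Z), via the Koszul formula.\<close>
definition koszul :: "('a::real_normed_vector \<Rightarrow> 'a \<Rightarrow> 'a \<Rightarrow> real) \<Rightarrow> ('a \<Rightarrow> 'a) \<Rightarrow> ('a \<Rightarrow> 'a) \<Rightarrow> ('a \<Rightarrow> 'a) \<Rightarrow> 'a \<Rightarrow> real" where
  "koszul G X Y Z p = (1/2) *
     ( dd (\<lambda>q. G q (Y q) (Z q)) p (X p) + dd (\<lambda>q. G q (X q) (Z q)) p (Y p)
     - dd (\<lambda>q. G q (X q) (Y q)) p (Z p)
     + G p (lie_bracket X Y p) (Z p) - G p (lie_bracket X Z p) (Y p) - G p (lie_bracket Y Z p) (X p))"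

end

theory Submission
  imports Defs
begin

text \<open>Since \<open>n = N\<^sup>-\<^sup>1 \<partial>\<^sub>t\<close> has no spatial component, the spatial part of \<open>[V, n]\<close> is
  \<open>-N\<^sup>-\<^sup>1 \<partial>\<^sub>t V\<^sup>i\<close>, so \<open>V\<close> is inheriting iff \<open>\<partial>\<^sub>t V\<^sup>i = 0\<close>. The mixed time-space component
  of the conformal Killing equation reads \<open>g\<^sub>i\<^sub>j \<partial>\<^sub>t V\<^sup>j = N\<^sup>2 \<partial>\<^sub>i V\<^sup>0\<close> (the conformal factor drops
  out because \<open>\<partial>\<^sub>t\<close> and \<open>\<partial>\<^sub>i\<close> are orthogonal), and since \<open>g\<^sub>i\<^sub>j\<close> is positive definite this
  vanishes iff \<open>V\<^sup>0\<close> is independent of the spatial coordinates, i.e. \<open>V\<^sup>0 = T(t)\<close> on the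
  connected slice. Finally \<open>V = N T n + U\<close> with \<open>U \<bottom> n\<close> just says \<open>V\<^sup>0 = T(t)\<close>.\<close>

lemma has_derivative_slice_snd:
  assumes "(f has_derivative D) (at (t, x))"
  shows "((\<lambda>y. f (t, y)) has_derivative (\<lambda>h. D (0, h))) (at x)"
proof -
  have "((\<lambda>y. (t, y)) has_derivative (\<lambda>h. (0, h))) (at x)"
    by (rule has_derivative_Pair[OF has_derivative_const has_derivative_ident])
  from has_derivative_compose[OF this assms] show ?thesis by simp
qed

lemma factors_through_fst_iff_partial_derivative_snd_zero:
  fixes f :: "'a::real_normed_vector \<times> 'b::euclidean_space \<Rightarrow> 'c::banach"
  assumes \<Omega>: "open \<Omega>" "connected \<Omega>"
    and deriv: "\<And>p. p \<in> I \<times> \<Omega> \<Longrightarrow> (f has_derivative D p) (at p)"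
  shows "(\<exists>T. \<forall>p\<in>I \<times> \<Omega>. f p = T (fst p)) \<longleftrightarrow> (\<forall>p\<in>I \<times> \<Omega>. \<forall>a. D p (0, a) = 0)"
proof
  assume "\<exists>T. \<forall>p\<in>I \<times> \<Omega>. f p = T (fst p)"
  then obtain T where T: "\<forall>p\<in>I \<times> \<Omega>. f p = T (fst p)" by blast
  show "\<forall>p\<in>I \<times> \<Omega>. \<forall>a. D p (0, a) = 0"
  proof (intro ballI allI)
    fix p a assume "p \<in> I \<times> \<Omega>"
    then obtain t x where p: "p = (t, x)" "t \<in> I" "x \<in> \<Omega>" by blast
    have "((\<lambda>y. f (t, y)) has_derivative (\<lambda>h. 0)) (at x)"
      by (rule has_derivative_transform_within_open[OF has_derivative_const[of "T t"] \<Omega>(1) p(3)])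
         (use T p(2) in simp)
    with has_derivative_slice_snd[OF deriv[of "(t, x)"]] p
    have "(\<lambda>h. D p (0, h)) = (\<lambda>h. 0)" by (simp add: has_derivative_unique)
    then show "D p (0, a) = 0" by (rule fun_cong)
  qed
next
  assume D0: "\<forall>p\<in>I \<times> \<Omega>. \<forall>a. D p (0, a) = 0"
  have const: "(\<lambda>y. f (t, y)) constant_on \<Omega>" if t: "t \<in> I" for t
  proof (rule has_derivative_zero_connected_constant_on[where K="{}"])
    have slice: "((\<lambda>y. f (t, y)) has_derivative (\<lambda>h. 0)) (at x)" if "x \<in> \<Omega>" for x
      using has_derivative_slice_snd[OF deriv[of "(t, x)"]] D0 t that by simp
    then show "continuous_on \<Omega> (\<lambda>y. f (t, y))"
      by (meson continuous_at_imp_continuous_on has_derivative_continuous)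
    show "\<forall>x\<in>\<Omega> - {}. ((\<lambda>y. f (t, y)) has_derivative (\<lambda>h. 0)) (at x within \<Omega>)"
      using slice by (simp add: has_derivative_at_withinI)
  qed (use \<Omega> in simp_all)
  define T where "T t = f (t, SOME x. x \<in> \<Omega>)" for t
  have "f p = T (fst p)" if "p \<in> I \<times> \<Omega>" for p
  proof -
    from that obtain t x where p: "p = (t, x)" "t \<in> I" "x \<in> \<Omega>" by blast
    from p(3) have "(SOME x. x \<in> \<Omega>) \<in> \<Omega>" by (rule someI)
    with const[OF p(2)] p(1,3) show ?thesis unfolding T_def constant_on_def by auto
  qed
  then show "\<exists>T. \<forall>p\<in>I \<times> \<Omega>. f p = T (fst p)" by blast
qed

lemma positive_definite_orthogonal_all_iff:
  fixes G :: "real^'n^'n"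
  assumes "\<forall>v. v \<noteq> 0 \<longrightarrow> v \<bullet> (G *v v) > 0"
  shows "x = 0 \<longleftrightarrow> (\<forall>a. x \<bullet> (G *v a) = 0)"
proof
  assume "\<forall>a. x \<bullet> (G *v a) = 0"
  then have "x \<bullet> (G *v x) = 0" by blast
  with assms show "x = 0" by force
qed simp

lemma snd_dd_unit_normal:
  assumes "N differentiable (at p)" "N p \<noteq> 0"
  shows "snd (dd (unit_normal N) p x) = 0"
proof -
  have "(\<lambda>q. 1 / N q) differentiable (at p)"
    using assms by (intro differentiable_divide) auto
  then obtain D where D: "((\<lambda>q. 1 / N q) has_derivative D) (at p)"
    unfolding differentiable_def by blast
  have "(unit_normal N has_derivative (\<lambda>h. (D h, 0))) (at p)"
    unfolding unit_normal_def[abs_def] by (rule has_derivative_Pair[OF D has_derivative_const])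
  then have "frechet_derivative (unit_normal N) (at p) = (\<lambda>h. (D h, 0))"
    by (rule frechet_derivative_at[symmetric])
  then show ?thesis unfolding dd_def by simp
qed

lemma lie_bracket_unit_normal_parallel_iff:
  assumes "linear (dd V p)" "N differentiable (at p)" "N p \<noteq> 0"
  shows "(\<exists>c. lie_bracket V (unit_normal N) p = c *\<^sub>R unit_normal N p)
           \<longleftrightarrow> snd (dd V p (1, 0)) = 0"
proof -
  have "dd V p (unit_normal N p) = (1 / N p) *\<^sub>R dd V p (1, 0)"
    using linear_scale[OF assms(1), of "1 / N p" "(1, 0)"] by (simp add: unit_normal_def)
  then have snd_bracket: "snd (lie_bracket V (unit_normal N) p) = - (1 / N p) *\<^sub>R snd (dd V p (1, 0))"
    using snd_dd_unit_normal[OF assms(2,3)] by (simp add: lie_bracket_def)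
  have parallel: "(\<exists>c. w = c *\<^sub>R unit_normal N p) \<longleftrightarrow> snd w = 0" for w
  proof
    assume "snd w = 0"
    with assms(3) have "w = (N p * fst w) *\<^sub>R unit_normal N p"
      by (simp add: unit_normal_def prod_eq_iff)
    then show "\<exists>c. w = c *\<^sub>R unit_normal N p" by blast
  qed (auto simp: unit_normal_def)
  show ?thesis
    unfolding parallel snd_bracket using assms(3) by simp
qed

lemma lie_metric_gbar_time_space:
  "lie_metric (gbar N g) V p (1, 0) (0, a)
     = snd (dd V p (1, 0)) \<bullet> (g p *v a) - (N p)\<^sup>2 * fst (dd V p (0, a))"
proof -
  have "(\<lambda>q. gbar N g q (1, 0) (0, a)) = (\<lambda>q. 0)" by (simp add: gbar_def)
  then show ?thesis by (simp add: lie_metric_def dd_def gbar_def)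
qed

lemma conformal_time_space_eq_0_iff:
  assumes conformal: "\<forall>u w. lie_metric (gbar N g) V p u w = 2 * \<psi> p * gbar N g p u w"
    and "\<forall>v. v \<noteq> 0 \<longrightarrow> v \<bullet> (g p *v v) > 0" and "N p \<noteq> 0"
  shows "snd (dd V p (1, 0)) = 0 \<longleftrightarrow> (\<forall>a. fst (dd V p (0, a)) = 0)"
proof -
  have "snd (dd V p (1, 0)) \<bullet> (g p *v a) = (N p)\<^sup>2 * fst (dd V p (0, a))" for a
  proof -
    have "lie_metric (gbar N g) V p (1, 0) (0, a) = 0"
      using conformal by (simp add: gbar_def)
    then show ?thesis by (simp add: lie_metric_gbar_time_space)
  qed
  then show ?thesis
    using positive_definite_orthogonal_all_iff[of "g p" "snd (dd V p (1, 0))"] assms(2,3) by simp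
qed

lemma normal_tangential_decomposition_iff:
  fixes N :: "real \<times> (real^'n) \<Rightarrow> real" and V :: "real \<times> (real^'n) \<Rightarrow> real \<times> (real^'n)"
  assumes "\<forall>p\<in>S. N p \<noteq> 0"
  shows "(\<exists>T U. \<forall>p\<in>S. V p = (N p * T (fst p)) *\<^sub>R unit_normal N p + U p
                        \<and> gbar N g p (U p) (unit_normal N p) = 0)
           \<longleftrightarrow> (\<exists>T. \<forall>p\<in>S. fst (V p) = T (fst p))"
proof -
  have normal_part: "(N p * c) *\<^sub>R unit_normal N p = (c, 0)" if "p \<in> S" for p c
    using assms that by (simp add: unit_normal_def)
  have orthogonal: "gbar N g p u (unit_normal N p) = 0 \<longleftrightarrow> fst u = 0" if "p \<in> S" for p u
    using assms that by (simp add: gbar_def unit_normal_def power2_eq_square)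
  show ?thesis
  proof
    assume "\<exists>T U. \<forall>p\<in>S. V p = (N p * T (fst p)) *\<^sub>R unit_normal N p + U p
                        \<and> gbar N g p (U p) (unit_normal N p) = 0"
    then obtain T U where TU: "\<forall>p\<in>S. V p = (N p * T (fst p)) *\<^sub>R unit_normal N p + U p
                        \<and> gbar N g p (U p) (unit_normal N p) = 0" by blast
    have "fst (V p) = T (fst p)" if "p \<in> S" for p
    proof -
      from TU that have "V p = (T (fst p), 0) + U p" and "fst (U p) = 0"
        by (simp_all add: normal_part orthogonal)
      then show ?thesis by simp
    qed
    then show "\<exists>T. \<forall>p\<in>S. fst (V p) = T (fst p)" by blast
  next
    assume "\<exists>T. \<forall>p\<in>S. fst (V p) = T (fst p)"
    then obtain T where T: "\<forall>p\<in>S. fst (V p) = T (fst p)" by blast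
    have "V p = (N p * T (fst p)) *\<^sub>R unit_normal N p + (V p - (T (fst p), 0))
           \<and> gbar N g p (V p - (T (fst p), 0)) (unit_normal N p) = 0" if "p \<in> S" for p
      using T that by (simp add: normal_part orthogonal)
    then show "\<exists>T U. \<forall>p\<in>S. V p = (N p * T (fst p)) *\<^sub>R unit_normal N p + U p
                        \<and> gbar N g p (U p) (unit_normal N p) = 0"
      by (intro exI[of _ T] exI[of _ "\<lambda>p. V p - (T (fst p), 0)"]) blast
  qed
qed

theorem theorem5:
  fixes N :: "real \<times> (real^'n) \<Rightarrow> real"
    and g :: "real \<times> (real^'n) \<Rightarrow> real^'n^'n"
    and V :: "real \<times> (real^'n) \<Rightarrow> real \<times> (real^'n)"
    and \<psi> :: "real \<times> (real^'n) \<Rightarrow> real"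
    and I :: "real set" and \<Omega> :: "(real^'n) set"
  assumes "open I" "is_interval I" "open \<Omega>" "connected \<Omega>"
    and "\<forall>p\<in>I \<times> \<Omega>. N p > 0"
    and "\<forall>p\<in>I \<times> \<Omega>. transpose (g p) = g p"
    and "\<forall>p\<in>I \<times> \<Omega>. \<forall>v. v \<noteq> 0 \<longrightarrow> v \<bullet> (g p *v v) > 0"
    and "\<forall>p\<in>I \<times> \<Omega>. N differentiable (at p) \<and> g differentiable (at p) \<and> V differentiable (at p)"
    and umbilical: "\<exists>\<tau>. \<forall>p\<in>I \<times> \<Omega>. \<forall>i j.
          koszul (gbar N g) (\<lambda>_. coord_vec i) (unit_normal N) (\<lambda>_. coord_vec j) p = \<tau> p * g p $ i $ j"
    and conformal: "\<forall>p\<in>I \<times> \<Omega>. \<forall>u w. lie_metric (gbar N g) V p u w = 2 * \<psi> p * gbar N g p u w"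
  shows "(\<exists>f. \<forall>p\<in>I \<times> \<Omega>. lie_bracket V (unit_normal N) p = f p *\<^sub>R unit_normal N p)
     \<longleftrightarrow> (\<exists>T U. \<forall>p\<in>I \<times> \<Omega>. V p = (N p * T (fst p)) *\<^sub>R unit_normal N p + U p
                              \<and> gbar N g p (U p) (unit_normal N p) = 0)"
proof -
  note N_pos = assms(5) and g_pos_def = assms(7) and smooth = assms(8)
  have N_nonzero: "\<forall>p\<in>I \<times> \<Omega>. N p \<noteq> 0" using N_pos by force
  have DV: "(V has_derivative dd V p) (at p)" if "p \<in> I \<times> \<Omega>" for p
    using smooth that unfolding dd_def using frechet_derivative_works by blast
  have "(\<exists>f. \<forall>p\<in>I \<times> \<Omega>. lie_bracket V (unit_normal N) p = f p *\<^sub>R unit_normal N p)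
          \<longleftrightarrow> (\<forall>p\<in>I \<times> \<Omega>. \<exists>c. lie_bracket V (unit_normal N) p = c *\<^sub>R unit_normal N p)"
    by (rule bchoice_iff[symmetric])
  also have "\<dots> \<longleftrightarrow> (\<forall>p\<in>I \<times> \<Omega>. snd (dd V p (1, 0)) = 0)"
    by (rule ball_cong[OF refl lie_bracket_unit_normal_parallel_iff])
       (use has_derivative_linear[OF DV] smooth N_nonzero in blast)+
  also have "\<dots> \<longleftrightarrow> (\<forall>p\<in>I \<times> \<Omega>. \<forall>a. fst (dd V p (0, a)) = 0)"
    by (rule ball_cong[OF refl conformal_time_space_eq_0_iff[where \<psi> = \<psi>]])
       (use conformal g_pos_def N_nonzero in blast)+
  also have "\<dots> \<longleftrightarrow> (\<exists>T. \<forall>p\<in>I \<times> \<Omega>. fst (V p) = T (fst p))"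
    by (rule factors_through_fst_iff_partial_derivative_snd_zero[OF assms(3,4)
          has_derivative_fst[OF DV], symmetric])
  also have "\<dots> \<longleftrightarrow> (\<exists>T U. \<forall>p\<in>I \<times> \<Omega>. V p = (N p * T (fst p)) *\<^sub>R unit_normal N p + U p
                              \<and> gbar N g p (U p) (unit_normal N p) = 0)"
    by (rule normal_tangential_decomposition_iff[OF N_nonzero, symmetric])
  finally show ?thesis .
qed

end
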